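(* Fix an integer $r\ge 1$. Let $A=(a_{ij})$ be a real symmetric $n\times n$ matrix with $n\ge r$, with eigenvalues $\lambda_1\ge \lambda_2\ge\cdots\ge\lambda_n$, such that $0\le a_{ij}\le 1$ for all $i\neq j$ and $a_{ii}\ge 0$ for all $1\le i\le n$. Then \[ \lambda_{n-r+1}+\lambda_{n-r+2}+\cdots+\lambda_n\ \ge\ -\frac{\beta_r}{2}\,n . \]
   Context: For integers $N\ge r\ge 1$, let $\mathcal P_r(N)=\{Q\in\mathbb R^{N\times N}: Q^2=Q,\ Q^T=Q,\ \operatorname{rank}Q=r\}$ be the set of rank-$r$ orthogonal projections. Define \[ \beta_r(N)=\frac1N\max_{Q\in\mathcal P_r(N)}\sum_{i,j=1}^N |q_{ij}|,\qquad \beta_r=\sup_{N\ge r}\beta_r(N), \] where $Q=(q_{ij})$. *)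

theory Defs
  imports "Jordan_Normal_Form.DL_Rank" "Jordan_Normal_Form.Char_Poly"
begin

definition proj_set :: "nat \<Rightarrow> nat \<Rightarrow> real mat set" where
  "proj_set r N = {Q. Q \<in> carrier_mat N N \<and> Q * Q = Q \<and> transpose_mat Q = Q
                      \<and> vec_space.rank N Q = r}"

definition beta_N :: "nat \<Rightarrow> nat \<Rightarrow> real" where
  "beta_N r N = (1 / real N) *
     Sup ((\<lambda>Q. \<Sum>i<N. \<Sum>j<N. \<bar>Q $$ (i, j)\<bar>) ` proj_set r N)"

definition beta :: "nat \<Rightarrow> real" where
  "beta r = Sup (beta_N r ` {N. N \<ge> r})"

end

theory Submission
  imports Defs Jordan_Normal_Form.Schur_Decomposition
begin

text \<open>
  Diagonalize \<open>A\<close> orthogonally and let \<open>V\<close> consist of orthonormal eigenvectors for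
  \<open>r\<close> of its eigenvalues. Then \<open>Q = V V\<^sup>T\<close> is a rank-\<open>r\<close> orthogonal projection and the
  sum of these eigenvalues is \<open>tr (V\<^sup>T A V) = \<Sum>\<^sub>i\<^sub>j a\<^sub>i\<^sub>j q\<^sub>i\<^sub>j\<close>. Since
  \<open>0 \<le> a\<^sub>i\<^sub>j \<le> 1\<close> off the diagonal and \<open>a\<^sub>i\<^sub>i, q\<^sub>i\<^sub>i \<ge> 0\<close>, every term satisfies
  \<open>a\<^sub>i\<^sub>j q\<^sub>i\<^sub>j \<ge> (q\<^sub>i\<^sub>j - |q\<^sub>i\<^sub>j|) / 2\<close>, and \<open>\<Sum>\<^sub>i\<^sub>j q\<^sub>i\<^sub>j = |V\<^sup>T 1|\<^sup>2 \<ge> 0\<close>; hence the sum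
  is at least \<open>-\<Sum>\<^sub>i\<^sub>j |q\<^sub>i\<^sub>j| / 2 \<ge> -\<beta>\<^sub>r n / 2\<close>.

  That \<open>\<beta>\<^sub>r\<close> is a genuine supremum (rather than the junk value of \<open>Sup\<close> on an
  unbounded set) follows from \<open>\<Sum>\<^sub>i\<^sub>j |q\<^sub>i\<^sub>j| \<le> N tr Q \<le> N rank Q\<close> for projections
  \<open>Q\<close>, where \<open>2 |q\<^sub>i\<^sub>j| \<le> q\<^sub>i\<^sub>i + q\<^sub>j\<^sub>j\<close> because \<open>Q = Q\<^sup>T Q\<close>.
\<close>

section \<open>Orthogonal diagonalization of real symmetric matrices\<close>

(* The library's Gram-Schmidt is stated for the conjugate inner product. *)
lemma conjugate_real_vec [simp]: "conjugate (v :: real vec) = v"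
  by (rule eq_vecI) (auto simp: conjugate_vec_def)

definition vec_normalize :: "real vec \<Rightarrow> real vec" where
  "vec_normalize w = (1 / sqrt (w \<bullet> w)) \<cdot>\<^sub>v w"

lemma vec_normalize_carrier [simp]: "w \<in> carrier_vec n \<Longrightarrow> vec_normalize w \<in> carrier_vec n"
  by (simp add: vec_normalize_def)

lemma scalar_prod_vec_normalize:
  assumes "u \<in> carrier_vec n" "w \<in> carrier_vec n"
  shows "vec_normalize u \<bullet> vec_normalize w = (u \<bullet> w) / (sqrt (u \<bullet> u) * sqrt (w \<bullet> w))"
  using assms unfolding vec_normalize_def
  by (simp add: smult_scalar_prod_distrib[of _ n] scalar_prod_smult_distrib[of _ n])

lemma vec_normalize_unit:
  assumes "w \<in> carrier_vec n" "w \<noteq> 0\<^sub>v n"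
  shows "vec_normalize w \<bullet> vec_normalize w = 1"
proof -
  have "w \<bullet> w > 0" using conjugate_square_greater_0_vec[OF assms(1)] assms by simp
  then show ?thesis using scalar_prod_vec_normalize[OF assms(1) assms(1)]
    by (simp add: real_sqrt_mult[symmetric])
qed

lemma vec_normalize_unit_id: "w \<bullet> w = 1 \<Longrightarrow> vec_normalize w = w"
  by (simp add: vec_normalize_def)

lemma real_eigenvalue_unit_eigvec:
  fixes A :: "real mat"
  assumes A: "A \<in> carrier_mat n n" and "eigenvalue A e"
  obtains u where "u \<in> carrier_vec n" "u \<bullet> u = 1" "A *\<^sub>v u = e \<cdot>\<^sub>v u"
proof -
  obtain v where v: "v \<in> carrier_vec n" "v \<noteq> 0\<^sub>v n" "A *\<^sub>v v = e \<cdot>\<^sub>v v"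
    using assms unfolding eigenvalue_def eigenvector_def by auto
  have "A *\<^sub>v vec_normalize v = e \<cdot>\<^sub>v vec_normalize v"
    using v A by (simp add: vec_normalize_def mult_mat_vec smult_smult_assoc mult.commute)
  then show thesis using that[of "vec_normalize v"] v vec_normalize_unit[OF v(1,2)] by simp
qed

lemma unit_vec_orthogonal_completion:
  assumes u: "u \<in> carrier_vec n" and u1: "u \<bullet> u = 1"
  obtains W :: "real mat" where "W \<in> carrier_mat n n" "W\<^sup>T * W = 1\<^sub>m n" "col W 0 = u"
proof -
  interpret cof_vec_space n "TYPE(real)" .
  have u0: "u \<noteq> 0\<^sub>v n" using u1 u by auto
  then have n: "n \<noteq> 0" using u by (metis carrier_vecD eq_vecI less_nat_zero_code zero_carrier_vec)
  define b where "b = basis_completion u"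
  from basis_completion[OF u u0, folded b_def]
  have b: "set b \<subseteq> carrier_vec n" "distinct b" "\<not> lin_dep (set b)" "hd b = u" "length b = n"
    by auto
  then obtain bs where bu: "b = u # bs" using n by (cases b) auto
  define gs where "gs = gram_schmidt n b"
  from gram_schmidt_result[OF b(1-3) refl, folded gs_def]
  have gs: "set gs \<subseteq> carrier_vec n" "corthogonal gs" "length gs = n"
    by (auto simp: b(5))
  have gs0: "gs ! 0 = u"
    using gram_schmidt_hd[OF u, of bs] gs(3) n unfolding gs_def bu
    by (cases "gram_schmidt n (u # bs)") auto
  define ws where "ws = map vec_normalize gs"
  have ws: "set ws \<subseteq> carrier_vec n" "length ws = n" using gs unfolding ws_def by auto
  have ws_orth: "ws ! i \<bullet> ws ! j = (if i = j then 1 else 0)" if "i < n" "j < n" for i j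
  proof -
    have c: "gs ! i \<in> carrier_vec n" "gs ! j \<in> carrier_vec n" using gs that by auto
    have "gs ! i \<noteq> 0\<^sub>v n" using corthogonalD[OF gs(2), of i i] gs that by auto
    moreover have "i \<noteq> j \<Longrightarrow> gs ! i \<bullet> gs ! j = 0" using corthogonalD[OF gs(2), of i j] gs that by auto
    ultimately show ?thesis
      using vec_normalize_unit[OF c(1)] scalar_prod_vec_normalize[OF c] that gs(3)
      by (auto simp: ws_def)
  qed
  define W where "W = mat_of_cols n ws"
  have W: "W \<in> carrier_mat n n" unfolding W_def using ws by auto
  have col_W: "col W j = ws ! j" if "j < n" for j
    unfolding W_def using ws that by (intro col_mat_of_cols) auto
  have "W\<^sup>T * W = 1\<^sub>m n" by (rule eq_matI) (use W in \<open>auto simp: col_W ws_orth\<close>)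
  moreover have "col W 0 = u"
    using col_W[of 0] n gs gs0 vec_normalize_unit_id[OF u1] by (simp add: ws_def)
  ultimately show thesis using that W by blast
qed

lemma orthogonal_mat_right_inverse:
  fixes P :: "'a :: field mat"
  assumes "P \<in> carrier_mat n n" "P\<^sup>T * P = 1\<^sub>m n"
  shows "P * P\<^sup>T = 1\<^sub>m n"
  using mat_mult_left_right_inverse[of "P\<^sup>T" n P] assms by auto

lemma orthogonal_mat_mult:
  fixes W B :: "'a :: comm_ring_1 mat"
  assumes W: "W \<in> carrier_mat n n" "W\<^sup>T * W = 1\<^sub>m n" and B: "B \<in> carrier_mat n n" "B\<^sup>T * B = 1\<^sub>m n"
  shows "(W * B)\<^sup>T * (W * B) = 1\<^sub>m n"
proof -
  have "(W * B)\<^sup>T * (W * B) = B\<^sup>T * (W\<^sup>T * W) * B"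
    using W(1) B(1) by (simp add: transpose_mult[of _ n n] assoc_mult_mat[of _ n n _ n _ n])
  also have "\<dots> = 1\<^sub>m n" using W B by simp
  finally show ?thesis .
qed

lemma congruence_mult:
  fixes A W B :: "'a :: comm_ring_1 mat"
  assumes "A \<in> carrier_mat n n" "W \<in> carrier_mat n n" "B \<in> carrier_mat n n"
  shows "(W * B)\<^sup>T * A * (W * B) = B\<^sup>T * (W\<^sup>T * A * W) * B"
  using assms by (simp add: transpose_mult[of _ n n] assoc_mult_mat[of _ n n _ n _ n])

lemma congruence_symmetric:
  fixes A W :: "'a :: comm_ring_1 mat"
  assumes A: "A \<in> carrier_mat n n" "A\<^sup>T = A" and W: "W \<in> carrier_mat n k"
  shows "(W\<^sup>T * A * W)\<^sup>T = W\<^sup>T * A * W"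
proof -
  have "(W\<^sup>T * A * W)\<^sup>T = W\<^sup>T * (W\<^sup>T * A)\<^sup>T"
    using A W by (intro transpose_mult[of _ k n]) auto
  also have "(W\<^sup>T * A)\<^sup>T = A * W"
    using A W by (subst transpose_mult[of _ k n]) auto
  finally show ?thesis using A W by simp
qed

lemma orthonormal_cols_inner:
  fixes V :: "'a :: comm_ring_1 mat"
  assumes "V \<in> carrier_mat n k" "V\<^sup>T * V = 1\<^sub>m k" "i < k" "j < k"
  shows "col V i \<bullet> col V j = (if i = j then 1 else 0)"
proof -
  have "col V i \<bullet> col V j = (V\<^sup>T * V) $$ (i, j)" using assms(1,3,4) by simp
  also have "\<dots> = (if i = j then 1 else 0)" using assms(2-4) by simp
  finally show ?thesis .
qed

lemma congruence_index:
  fixes A V :: "'a :: comm_ring_1 mat"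
  assumes "A \<in> carrier_mat n n" "V \<in> carrier_mat n k" "i < k" "j < k"
  shows "(V\<^sup>T * A * V) $$ (i, j) = col V i \<bullet> (A *\<^sub>v col V j)"
  using assms by (simp add: assoc_mult_mat[of _ k n _ n _ k] mult_mat_vec_def)

lemma char_poly_orthogonal_congruence:
  fixes A P :: "'a :: field mat"
  assumes A: "A \<in> carrier_mat n n" and P: "P \<in> carrier_mat n n" "P\<^sup>T * P = 1\<^sub>m n"
  shows "char_poly (P\<^sup>T * A * P) = char_poly A"
proof (rule char_poly_similar)
  have "similar_mat_wit (P\<^sup>T * A * P) A (P\<^sup>T) P"
    using A P orthogonal_mat_right_inverse[OF P] by (intro similar_mat_witI[of _ _ n]) auto
  then show "similar_mat (P\<^sup>T * A * P) A" unfolding similar_mat_def by blast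
qed

lemma eigvec_first_col_congruence_block:
  fixes A W :: "'a :: comm_ring_1 mat"
  assumes A: "A \<in> carrier_mat (1 + m) (1 + m)" "A\<^sup>T = A"
    and W: "W \<in> carrier_mat (1 + m) (1 + m)" "W\<^sup>T * W = 1\<^sub>m (1 + m)"
    and eig: "A *\<^sub>v col W 0 = e \<cdot>\<^sub>v col W 0"
  obtains A3 where "A3 \<in> carrier_mat m m" "A3\<^sup>T = A3"
    "W\<^sup>T * A * W = four_block_mat (mat 1 1 (\<lambda>_. e)) (0\<^sub>m 1 m) (0\<^sub>m m 1) A3"
proof
  define A' where "A' = W\<^sup>T * A * W"
  have A': "A' \<in> carrier_mat (1 + m) (1 + m)" "A'\<^sup>T = A'"
    using A W congruence_symmetric[OF A W(1)] by (auto simp: A'_def)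
  have col0: "A' $$ (i, 0) = (if i = 0 then e else 0)" if "i < 1 + m" for i
  proof -
    have "A' $$ (i, 0) = col W i \<bullet> (e \<cdot>\<^sub>v col W 0)"
      using congruence_index[OF A(1) W(1) that, of 0] eig by (simp add: A'_def)
    also have "\<dots> = e * (col W i \<bullet> col W 0)"
      using W that by (simp add: scalar_prod_smult_distrib[of _ "1 + m"])
    finally show ?thesis using orthonormal_cols_inner[OF W that, of 0] by simp
  qed
  have row0: "A' $$ (0, j) = (if j = 0 then e else 0)" if "j < 1 + m" for j
    using col0[OF that] arg_cong[OF A'(2), of "\<lambda>M. M $$ (j, 0)"] A'(1) that by auto
  define A3 where "A3 = mat m m (\<lambda>(i, j). A' $$ (Suc i, Suc j))"
  show "A3 \<in> carrier_mat m m" by (simp add: A3_def)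
  show "A3\<^sup>T = A3"
  proof (rule eq_matI)
    fix i j assume "i < dim_row A3" "j < dim_col A3"
    then show "A3\<^sup>T $$ (i, j) = A3 $$ (i, j)"
      using A'(1) arg_cong[OF A'(2), of "\<lambda>M. M $$ (Suc i, Suc j)"] by (simp add: A3_def)
  qed (simp_all add: A3_def)
  show "W\<^sup>T * A * W = four_block_mat (mat 1 1 (\<lambda>_. e)) (0\<^sub>m 1 m) (0\<^sub>m m 1) A3"
    using A'(1) col0 row0 unfolding A'_def[symmetric] by (intro eq_matI) (auto simp: A3_def)
qed

lemma block_diag_orthogonal_congruence:
  fixes P A3 :: "'a :: comm_ring_1 mat"
  assumes P: "P \<in> carrier_mat m m" "P\<^sup>T * P = 1\<^sub>m m" and A3: "A3 \<in> carrier_mat m m"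
  defines "B \<equiv> four_block_mat (1\<^sub>m 1) (0\<^sub>m 1 m) (0\<^sub>m m 1) P"
  shows "B \<in> carrier_mat (1 + m) (1 + m)" "B\<^sup>T * B = 1\<^sub>m (1 + m)"
    "B\<^sup>T * four_block_mat (mat 1 1 (\<lambda>_. e)) (0\<^sub>m 1 m) (0\<^sub>m m 1) A3 * B
     = four_block_mat (mat 1 1 (\<lambda>_. e)) (0\<^sub>m 1 m) (0\<^sub>m m 1) (P\<^sup>T * A3 * P)"
proof -
  show "B \<in> carrier_mat (1 + m) (1 + m)"
    unfolding B_def using P by (intro four_block_carrier_mat) auto
  have Bt: "B\<^sup>T = four_block_mat (1\<^sub>m 1) (0\<^sub>m 1 m) (0\<^sub>m m 1) P\<^sup>T"
    unfolding B_def using P by (subst transpose_four_block_mat) auto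
  show "B\<^sup>T * B = 1\<^sub>m (1 + m)"
    unfolding Bt unfolding B_def using P
    by (subst mult_four_block_mat[of _ 1 1 _ m _ m _ _ 1 _ m]) auto
  show "B\<^sup>T * four_block_mat (mat 1 1 (\<lambda>_. e)) (0\<^sub>m 1 m) (0\<^sub>m m 1) A3 * B
     = four_block_mat (mat 1 1 (\<lambda>_. e)) (0\<^sub>m 1 m) (0\<^sub>m m 1) (P\<^sup>T * A3 * P)"
    unfolding Bt unfolding B_def using P A3
    by (subst mult_four_block_mat[of _ 1 1 _ m _ m _ _ 1 _ m], auto,
        subst mult_four_block_mat[of _ 1 1 _ m _ m _ _ 1 _ m], auto)
qed

lemma char_poly_block_deflate:
  fixes A3 :: "'a :: field mat"
  assumes "A3 \<in> carrier_mat m m"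
    and "char_poly (four_block_mat (mat 1 1 (\<lambda>_. e)) (0\<^sub>m 1 m) (0\<^sub>m m 1) A3) = [:- e, 1:] * p"
  shows "char_poly A3 = p"
proof -
  have "char_poly (four_block_mat (mat 1 1 (\<lambda>_. e)) (0\<^sub>m 1 m) (0\<^sub>m m 1) A3)
      = [:- e, 1:] * char_poly A3"
    using assms(1)
    by (subst char_poly_four_block_zeros_col) (auto simp: char_poly_defs det_def sign_def)
  then show ?thesis using assms(2) by (metis mult_cancel_left pCons_eq_0_iff zero_neq_one)
qed

theorem real_symmetric_orthogonal_diagonalization:
  fixes A :: "real mat"
  assumes "A \<in> carrier_mat n n" "A\<^sup>T = A" "char_poly A = (\<Prod>e\<leftarrow>es. [:- e, 1:])"
  shows "\<exists>P \<in> carrier_mat n n. P\<^sup>T * P = 1\<^sub>m n \<and> P\<^sup>T * A * P = mat_diag n (\<lambda>k. es ! k)"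
  using assms
proof (induct es arbitrary: n A)
  case Nil
  then have "n = 0" using degree_monic_char_poly[OF Nil(1)] by simp
  then show ?case by (intro bexI[of _ "1\<^sub>m n"]) (auto simp: mat_diag_def)
next
  case (Cons e es n A)
  note A = Cons(2-3)
  have cp: "char_poly A = [:- e, 1:] * (\<Prod>e\<leftarrow>es. [:- e, 1:])" using Cons(4) by simp
  have "monic (\<Prod>e\<leftarrow>es. [:- e, 1:])" by (rule monic_prod_list) auto
  then have "degree (char_poly A) \<noteq> 0" unfolding cp by (subst degree_mult_eq) auto
  then obtain m where n: "n = 1 + m" using degree_monic_char_poly[OF A(1)] by (cases n) auto
  have "eigenvalue A e" unfolding eigenvalue_root_char_poly[OF A(1)] cp by simp
  then obtain u where u: "u \<in> carrier_vec n" "u \<bullet> u = 1" and Au: "A *\<^sub>v u = e \<cdot>\<^sub>v u"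
    using real_eigenvalue_unit_eigvec[OF A(1)] by blast
  obtain W where W: "W \<in> carrier_mat n n" "W\<^sup>T * W = 1\<^sub>m n" "col W 0 = u"
    using unit_vec_orthogonal_completion[OF u] .
  obtain A3 where A3: "A3 \<in> carrier_mat m m" "A3\<^sup>T = A3"
    and blk: "W\<^sup>T * A * W = four_block_mat (mat 1 1 (\<lambda>_. e)) (0\<^sub>m 1 m) (0\<^sub>m m 1) A3"
    using eigvec_first_col_congruence_block[of A m W e] A W Au unfolding n by auto
  have "char_poly A3 = (\<Prod>e\<leftarrow>es. [:- e, 1:])"
    using char_poly_block_deflate[OF A3(1)] char_poly_orthogonal_congruence[OF A(1) W(1-2)] blk cp
    by simp
  then obtain P' where P': "P' \<in> carrier_mat m m" "P'\<^sup>T * P' = 1\<^sub>m m"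
    and P'A3: "P'\<^sup>T * A3 * P' = mat_diag m (\<lambda>k. es ! k)"
    using Cons(1)[OF A3] by blast
  define B where "B = four_block_mat (1\<^sub>m 1) (0\<^sub>m 1 m) (0\<^sub>m m 1) P'"
  note B = block_diag_orthogonal_congruence[OF P' A3(1), folded B_def, folded n]
  have "(W * B)\<^sup>T * A * (W * B) = B\<^sup>T * (W\<^sup>T * A * W) * B"
    using A W B by (intro congruence_mult) auto
  also have "\<dots> = mat_diag n (\<lambda>k. (e # es) ! k)"
    unfolding blk B(3) P'A3 n by (rule eq_matI) (auto simp: mat_diag_def)
  finally show ?case using W B orthogonal_mat_mult[of W n B] by (intro bexI[of _ "W * B"]) auto
qed

lemma orthogonal_diagonalization_eigvec:
  fixes Q P :: "'a :: field mat"
  assumes Q: "Q \<in> carrier_mat n n" and P: "P \<in> carrier_mat n n" "P\<^sup>T * P = 1\<^sub>m n"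
    and D: "P\<^sup>T * Q * P = mat_diag n d" and k: "k < n"
  shows "Q *\<^sub>v col P k = d k \<cdot>\<^sub>v col P k"
proof -
  have "Q * P = P * P\<^sup>T * Q * P"
    using Q P orthogonal_mat_right_inverse[OF P] by simp
  also have "\<dots> = P * mat_diag n d"
    using Q P D by (simp add: assoc_mult_mat[of _ n n _ n _ n])
  finally have QP: "Q * P = P * mat_diag n d" .
  have "Q *\<^sub>v col P k = col (Q * P) k" using col_mult2[OF Q P(1) k] by simp
  also have "\<dots> = d k \<cdot>\<^sub>v col P k"
    unfolding QP using P k by (intro eq_vecI) (auto simp: mat_diag_mult_right[of _ n])
  finally show ?thesis .
qed

lemma orthonormal_cols_select:
  fixes P :: "'a :: comm_ring_1 mat"
  assumes P: "P \<in> carrier_mat n N" "P\<^sup>T * P = 1\<^sub>m N" and ks: "distinct ks" "set ks \<subseteq> {..<N}"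
  shows "(mat_of_cols n (map (col P) ks))\<^sup>T * mat_of_cols n (map (col P) ks) = 1\<^sub>m (length ks)"
proof (rule eq_matI)
  fix i j assume "i < dim_row (1\<^sub>m (length ks))" "j < dim_col (1\<^sub>m (length ks))"
  then have ij: "i < length ks" "j < length ks" by auto
  then have "ks ! i < N" "ks ! j < N" using ks(2) nth_mem by blast+
  then show "((mat_of_cols n (map (col P) ks))\<^sup>T * mat_of_cols n (map (col P) ks)) $$ (i, j)
      = 1\<^sub>m (length ks) $$ (i, j)"
    using ij P orthonormal_cols_inner[OF P, of "ks ! i" "ks ! j"] nth_eq_iff_index_eq[OF ks(1) ij]
    by (simp add: col_mat_of_cols)
qed auto

lemma congruence_select_cols_index:
  fixes A P :: "'a :: comm_ring_1 mat"
  assumes A: "A \<in> carrier_mat n n" and P: "P \<in> carrier_mat n N" and ks: "set ks \<subseteq> {..<N}"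
    and ij: "i < length ks" "j < length ks"
  shows "((mat_of_cols n (map (col P) ks))\<^sup>T * A * mat_of_cols n (map (col P) ks)) $$ (i, j)
    = (P\<^sup>T * A * P) $$ (ks ! i, ks ! j)"
proof -
  let ?V = "mat_of_cols n (map (col P) ks)"
  have V: "?V \<in> carrier_mat n (length ks)"
    using mat_of_cols_carrier(1)[of n "map (col P) ks"] by simp
  have ks_N: "ks ! l < N" if "l < length ks" for l using ks that nth_mem by blast
  have col_V: "col ?V l = col P (ks ! l)" if "l < length ks" for l
    using that P ks_N[OF that] by simp
  show ?thesis
    using ks_N[OF ij(1)] ks_N[OF ij(2)] congruence_index[OF A V ij]
      congruence_index[OF A P, of "ks ! i" "ks ! j"] col_V ij
    by simp
qed

lemma congruence_diag_sum:
  fixes A V :: "'a :: comm_ring_1 mat"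
  assumes A: "A \<in> carrier_mat n n" and V: "V \<in> carrier_mat n k"
  shows "(\<Sum>l<k. (V\<^sup>T * A * V) $$ (l, l)) = (\<Sum>i<n. \<Sum>j<n. A $$ (i, j) * (V * V\<^sup>T) $$ (i, j))"
proof -
  have "(\<Sum>l<k. (V\<^sup>T * A * V) $$ (l, l))
      = (\<Sum>l<k. \<Sum>i<n. \<Sum>j<n. V $$ (i, l) * A $$ (i, j) * V $$ (j, l))"
    using A V
    by (intro sum.cong refl, subst congruence_index[OF A V])
      (auto simp: scalar_prod_def sum_distrib_left lessThan_atLeast0 mult.assoc)
  also have "\<dots> = (\<Sum>i<n. \<Sum>j<n. \<Sum>l<k. V $$ (i, l) * A $$ (i, j) * V $$ (j, l))"
    by (subst sum.swap, subst (2) sum.swap, rule refl)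
  also have "\<dots> = (\<Sum>i<n. \<Sum>j<n. A $$ (i, j) * (V * V\<^sup>T) $$ (i, j))"
    using V by (intro sum.cong refl)
      (auto simp: scalar_prod_def sum_distrib_left lessThan_atLeast0 algebra_simps)
  finally show ?thesis .
qed

lemma orthogonal_diagonalization_fixed_cols:
  fixes Q P :: "'a :: field mat"
  assumes Q: "Q \<in> carrier_mat n n" and P: "P \<in> carrier_mat n n" "P\<^sup>T * P = 1\<^sub>m n"
    and D: "P\<^sup>T * Q * P = mat_diag n d"
    and ks: "set ks \<subseteq> {..<n}" and one: "\<And>k. k \<in> set ks \<Longrightarrow> d k = 1"
  shows "Q * mat_of_cols n (map (col P) ks) = mat_of_cols n (map (col P) ks)"
proof (rule mat_col_eqI)
  let ?V = "mat_of_cols n (map (col P) ks)"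
  fix j assume "j < dim_col ?V"
  then have j: "j < length ks" by simp
  then have k: "ks ! j < n" "d (ks ! j) = 1" using ks one nth_mem by blast+
  have V: "?V \<in> carrier_mat n (length ks)"
    using mat_of_cols_carrier(1)[of n "map (col P) ks"] by simp
  have "col (Q * ?V) j = Q *\<^sub>v col P (ks ! j)"
    using col_mult2[OF Q V j] j k P by simp
  also have "\<dots> = col ?V j"
    using orthogonal_diagonalization_eigvec[OF Q P D k(1)] k j P by simp
  finally show "col (Q * ?V) j = col ?V j" .
qed (use Q in auto)

lemma (in vec_space) rank_mult_le:
  assumes A: "A \<in> carrier_mat n m" and B: "B \<in> carrier_mat m k"
  shows "rank (A * B) \<le> rank A"
proof -
  have AB: "A * B \<in> carrier_mat n k" using A B by auto
  have sub: "col_space (A * B) \<subseteq> col_space A"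
  proof
    fix y assume "y \<in> col_space (A * B)"
    then obtain x where x: "x \<in> carrier_vec k" and y: "y = (A * B) *\<^sub>v x" "y \<in> carrier_vec n"
      unfolding col_space_eq[OF AB] using AB by auto
    have "y = A *\<^sub>v (B *\<^sub>v x)" unfolding y using A B x by (simp add: assoc_mult_mat_vec)
    moreover have "B *\<^sub>v x \<in> carrier_vec m" using B x by auto
    ultimately show "y \<in> col_space A" unfolding col_space_eq[OF A] using A y(2) by auto
  qed
  have cols: "set (cols A) \<subseteq> carrier_vec n" "set (cols (A * B)) \<subseteq> carrier_vec n"
    using A AB cols_dim by blast+
  have SA: "VectorSpace.subspace class_ring (col_space A) V"
    and SAB: "VectorSpace.subspace class_ring (col_space (A * B)) V"
    unfolding col_space_def using span_is_subspace[OF cols(1)] span_is_subspace[OF cols(2)] by auto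
  have "vectorspace.dim class_ring (vs (col_space (A * B)))
      \<le> vectorspace.dim class_ring (vs (col_space A))"
    using vectorspace.subspace_dim[OF subspace_is_vs[OF SA] nested_subspaces[OF SA SAB sub]]
      fin_dim_span_cols[OF A] fin_dim_span_cols[OF AB]
    unfolding col_space_def by auto
  then show ?thesis unfolding rank_def col_space_def by simp
qed

lemma (in vec_space) rank_orthonormal_cols:
  assumes U: "U \<in> carrier_mat n k" "U\<^sup>T * U = 1\<^sub>m k"
  shows "rank U = k"
proof -
  have "distinct (cols U)"
    using orthonormal_cols_inner[OF U] U(1) unfolding distinct_conv_nth
    by (metis cols_length cols_nth carrier_matD(2) one_neq_zero)
  moreover have "lin_indpt (set (cols U))"
  proof
    assume "lin_dep (set (cols U))"
    from lin_depE[OF U(1) this \<open>distinct (cols U)\<close>]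
    obtain v where v: "v \<in> carrier_vec k" "v \<noteq> 0\<^sub>v k" "U *\<^sub>v v = 0\<^sub>v n" .
    have "v = (U\<^sup>T * U) *\<^sub>v v" using U v by simp
    also have "\<dots> = U\<^sup>T *\<^sub>v (U *\<^sub>v v)" using U(1) v by (simp add: assoc_mult_mat_vec[of _ k n _ k])
    also have "\<dots> = 0\<^sub>v k" using v U by (intro eq_vecI) auto
    finally show False using v by simp
  qed
  ultimately show ?thesis using lin_indpt_full_rank[OF U(1)] by simp
qed

lemma (in vec_space) rank_ge_orthonormal_fixed_cols:
  assumes Q: "Q \<in> carrier_mat n n" and U: "U \<in> carrier_mat n k" "U\<^sup>T * U = 1\<^sub>m k"
    and QU: "Q * U = U"
  shows "k \<le> rank Q"
  using rank_orthonormal_cols[OF U] rank_mult_le[OF Q U(1)] unfolding QU by simp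

section \<open>Orthogonal projections and \<open>\<beta>\<^sub>r\<close>\<close>

lemma gram_orthonormal_in_proj_set:
  fixes V :: "real mat"
  assumes V: "V \<in> carrier_mat n r" "V\<^sup>T * V = 1\<^sub>m r"
  shows "V * V\<^sup>T \<in> proj_set r n"
proof -
  have QV: "V * V\<^sup>T * V = V"
    using V by (simp add: assoc_mult_mat[of _ n r _ n _ r])
  have "V * V\<^sup>T * (V * V\<^sup>T) = V * ((V\<^sup>T * V) * V\<^sup>T)"
    using V(1) by (simp add: assoc_mult_mat[of _ n r _ n _ n] assoc_mult_mat[of _ r n _ r _ n])
  then have idem: "V * V\<^sup>T * (V * V\<^sup>T) = V * V\<^sup>T" using V by simp
  have "vec_space.rank n (V * V\<^sup>T) \<le> r"
    using vec_space.rank_mult_le[OF V(1), of "V\<^sup>T" n] vec_space.rank_le_nc[OF V(1)] V by simp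
  moreover have "r \<le> vec_space.rank n (V * V\<^sup>T)"
    using vec_space.rank_ge_orthonormal_fixed_cols[OF _ V QV] V by simp
  ultimately show ?thesis
    using V idem unfolding proj_set_def by (auto simp: transpose_mult[of _ n r])
qed

lemma idempotent_eigenvalue_01:
  fixes Q :: "'a :: field mat"
  assumes Q: "Q \<in> carrier_mat n n" "Q * Q = Q" and "eigenvalue Q a"
  shows "a = 0 \<or> a = 1"
proof -
  obtain v where v: "v \<in> carrier_vec n" "v \<noteq> 0\<^sub>v n" "Q *\<^sub>v v = a \<cdot>\<^sub>v v"
    using assms unfolding eigenvalue_def eigenvector_def by auto
  have "a \<cdot>\<^sub>v v = (Q * Q) *\<^sub>v v" using Q v by simp
  also have "\<dots> = Q *\<^sub>v (Q *\<^sub>v v)" using Q(1) v(1) by (simp add: assoc_mult_mat_vec[of _ n n _ n])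
  also have "\<dots> = (a * a) \<cdot>\<^sub>v v" using Q(1) v by (simp add: mult_mat_vec smult_smult_assoc)
  finally have eq: "a \<cdot>\<^sub>v v = (a * a) \<cdot>\<^sub>v v" .
  obtain i where "i < n" "v $ i \<noteq> 0" using v(1,2) by (metis carrier_vecD eq_vecI index_zero_vec)
  then have "a = a * a" using arg_cong[OF eq, of "\<lambda>w. w $ i"] v(1) by auto
  then show ?thesis by (metis mult.right_neutral mult_cancel_left)
qed

lemma idempotent_char_poly_01:
  fixes Q :: "real mat"
  assumes Q: "Q \<in> carrier_mat N N" "Q * Q = Q"
  obtains es where "char_poly Q = (\<Prod>e\<leftarrow>es. [:- e, 1:])" "set es \<subseteq> {0, 1}"
proof -
  interpret h: map_poly_inj_idom_hom complex_of_real ..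
  let ?Qc = "of_real_hom.mat_hom Q :: complex mat"
  have Qc_carrier: "?Qc \<in> carrier_mat N N" using Q(1) by simp
  have Qc_idem: "?Qc * ?Qc = ?Qc" using of_real_hom.mat_hom_mult[OF Q(1) Q(1)] Q(2) by metis
  note Qc = Qc_carrier Qc_idem
  obtain as where as: "char_poly ?Qc = (\<Prod>a\<leftarrow>as. [:- a, 1:])"
    using char_poly_factorized[OF Qc(1)] by auto
  have as01: "a \<in> {0, 1}" if "a \<in> set as" for a
    using idempotent_eigenvalue_01[OF Qc] linear_poly_root[OF that]
    unfolding eigenvalue_root_char_poly[OF Qc(1)] as by auto
  define es where "es = map Re as"
  have "map (complex_of_real \<circ> Re) as = as" using as01 by (intro map_idI) force
  then have "as = map complex_of_real es" unfolding es_def map_map by simp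
  then have "map_poly complex_of_real (char_poly Q) = map_poly complex_of_real (\<Prod>e\<leftarrow>es. [:- e, 1:])"
    unfolding of_real_hom.char_poly_hom[OF Q(1), symmetric] as h.hom_prod_list
    by (simp add: comp_def)
  then have "char_poly Q = (\<Prod>e\<leftarrow>es. [:- e, 1:])" by (rule h.injectivity)
  moreover have "set es \<subseteq> {0, 1}" unfolding es_def using as01 by force
  ultimately show thesis using that by blast
qed

lemma symmetric_idempotent_diag_sum_le_rank:
  fixes Q :: "real mat"
  assumes Q: "Q \<in> carrier_mat N N" "Q * Q = Q" "Q\<^sup>T = Q"
  shows "(\<Sum>i<N. Q $$ (i, i)) \<le> real (vec_space.rank N Q)"
proof -
  obtain es where cp: "char_poly Q = (\<Prod>e\<leftarrow>es. [:- e, 1:])" and es01: "set es \<subseteq> {0, 1}"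
    using idempotent_char_poly_01[OF Q(1,2)] .
  have len: "length es = N"
    using degree_monic_char_poly[OF Q(1)] degree_linear_factors[of uminus es] cp by auto
  obtain P where P: "P \<in> carrier_mat N N" "P\<^sup>T * P = 1\<^sub>m N"
    and D: "P\<^sup>T * Q * P = mat_diag N (\<lambda>k. es ! k)"
    using real_symmetric_orthogonal_diagonalization[OF Q(1,3) cp] by blast
  define ks where "ks = filter (\<lambda>k. es ! k = 1) [0..<N]"
  have ks: "distinct ks" "set ks \<subseteq> {..<N}" by (auto simp: ks_def)
  have "(\<Sum>i<N. Q $$ (i, i)) = (\<Sum>i<N. \<Sum>j<N. Q $$ (i, j) * (P * P\<^sup>T) $$ (i, j))"
    unfolding orthogonal_mat_right_inverse[OF P] by (simp add: of_bool_def if_distrib sum.If_cases)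
  also have "\<dots> = (\<Sum>k<N. es ! k)"
    using congruence_diag_sum[OF Q(1) P(1)] D by (simp add: mat_diag_def)
  also have "\<dots> = (\<Sum>k<N. of_bool (es ! k = 1))"
    using es01 len by (intro sum.cong refl) (auto dest!: nth_mem)
  also have "\<dots> = real (length ks)"
    using distinct_card[OF ks(1)] by (simp add: sum_of_bool_eq ks_def Int_def lessThan_atLeast0)
  also have "length ks \<le> vec_space.rank N Q"
    using vec_space.rank_ge_orthonormal_fixed_cols[OF Q(1) _ orthonormal_cols_select[OF P ks]]
      orthogonal_diagonalization_fixed_cols[OF Q(1) P D ks(2)]
      mat_of_cols_carrier(1)[of N "map (col P) ks"]
    by (simp add: ks_def)
  finally show ?thesis by simp
qed

lemma symmetric_idempotent_abs_entry_le:
  fixes Q :: "real mat"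
  assumes Q: "Q \<in> carrier_mat N N" "Q * Q = Q" "Q\<^sup>T = Q" and ij: "i < N" "j < N"
  shows "2 * \<bar>Q $$ (i, j)\<bar> \<le> Q $$ (i, i) + Q $$ (j, j)"
proof -
  have gram: "Q $$ (i', j') = (\<Sum>l<N. Q $$ (l, i') * Q $$ (l, j'))" if "i' < N" "j' < N" for i' j'
  proof -
    have "Q $$ (i', j') = (Q\<^sup>T * Q) $$ (i', j')" using Q by simp
    then show ?thesis using Q(1) that by (simp add: scalar_prod_def lessThan_atLeast0)
  qed
  have "2 * \<bar>Q $$ (i, j)\<bar> \<le> (\<Sum>l<N. 2 * (\<bar>Q $$ (l, i)\<bar> * \<bar>Q $$ (l, j)\<bar>))"
    unfolding gram[OF ij] sum_distrib_left[symmetric] abs_mult[symmetric]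
    by (intro mult_left_mono sum_abs) simp
  also have "\<dots> \<le> (\<Sum>l<N. (Q $$ (l, i))\<^sup>2 + (Q $$ (l, j))\<^sup>2)"
  proof (rule sum_mono)
    fix l
    show "2 * (\<bar>Q $$ (l, i)\<bar> * \<bar>Q $$ (l, j)\<bar>) \<le> (Q $$ (l, i))\<^sup>2 + (Q $$ (l, j))\<^sup>2"
      using sum_squares_bound[of "\<bar>Q $$ (l, i)\<bar>" "\<bar>Q $$ (l, j)\<bar>"] by (simp add: mult.assoc)
  qed
  also have "\<dots> = Q $$ (i, i) + Q $$ (j, j)"
    by (simp add: gram[OF ij(1,1)] gram[OF ij(2,2)] sum.distrib power2_eq_square)
  finally show ?thesis .
qed

lemma symmetric_idempotent_sum_abs_le:
  fixes Q :: "real mat"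
  assumes Q: "Q \<in> carrier_mat N N" "Q * Q = Q" "Q\<^sup>T = Q"
  shows "(\<Sum>i<N. \<Sum>j<N. \<bar>Q $$ (i, j)\<bar>) \<le> real N * (\<Sum>i<N. Q $$ (i, i))"
proof -
  have "(\<Sum>i<N. \<Sum>j<N. \<bar>Q $$ (i, j)\<bar>) \<le> (\<Sum>i<N. \<Sum>j<N. (Q $$ (i, i) + Q $$ (j, j)) / 2)"
    using symmetric_idempotent_abs_entry_le[OF Q] by (intro sum_mono) fastforce
  also have "\<dots> = real N * (\<Sum>i<N. Q $$ (i, i))"
    by (simp add: sum.distrib add_divide_distrib sum_divide_distrib[symmetric] sum_distrib_left)
  finally show ?thesis .
qed

lemma proj_set_sum_abs_le:
  assumes "Q \<in> proj_set r N"
  shows "(\<Sum>i<N. \<Sum>j<N. \<bar>Q $$ (i, j)\<bar>) \<le> real N * real r"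
proof -
  have Q: "Q \<in> carrier_mat N N" "Q * Q = Q" "Q\<^sup>T = Q" "vec_space.rank N Q = r"
    using assms unfolding proj_set_def by auto
  show ?thesis
    using symmetric_idempotent_sum_abs_le[OF Q(1-3)]
      symmetric_idempotent_diag_sum_le_rank[OF Q(1-3)]
    unfolding Q(4) by (meson mult_left_mono of_nat_0_le_iff order_trans)
qed

lemma proj_set_nonempty:
  assumes "r \<le> N"
  shows "proj_set r N \<noteq> {}"
proof -
  let ?V = "mat_of_cols N (map (col (1\<^sub>m N :: real mat)) [0..<r])"
  have "set [0..<r] \<subseteq> {..<N}" using assms by auto
  then have "?V\<^sup>T * ?V = 1\<^sub>m r" using orthonormal_cols_select[of "1\<^sub>m N" N N "[0..<r]"] by simp
  then have "?V * ?V\<^sup>T \<in> proj_set r N"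
    using gram_orthonormal_in_proj_set mat_of_cols_carrier(1)[of N "map (col (1\<^sub>m N)) [0..<r]"]
    by simp
  then show ?thesis by blast
qed

lemma beta_N_le:
  assumes "r \<le> N"
  shows "beta_N r N \<le> real r"
proof (cases "N = 0")
  case False
  let ?S = "(\<lambda>Q. \<Sum>i<N. \<Sum>j<N. \<bar>Q $$ (i, j)\<bar>) ` proj_set r N"
  have "Sup ?S \<le> real N * real r"
    using proj_set_nonempty[OF assms] proj_set_sum_abs_le by (intro cSup_least) auto
  then show ?thesis using False unfolding beta_N_def by (simp add: field_simps)
qed (simp add: beta_N_def)

lemma proj_set_sum_abs_le_beta:
  assumes Q: "Q \<in> proj_set r N" and "r \<le> N"
  shows "(\<Sum>i<N. \<Sum>j<N. \<bar>Q $$ (i, j)\<bar>) \<le> real N * beta r"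
proof (cases "N = 0")
  case False
  let ?S = "(\<lambda>Q. \<Sum>i<N. \<Sum>j<N. \<bar>Q $$ (i, j)\<bar>) ` proj_set r N"
  have "(\<Sum>i<N. \<Sum>j<N. \<bar>Q $$ (i, j)\<bar>) \<le> Sup ?S"
    using Q proj_set_sum_abs_le by (intro cSup_upper bdd_aboveI2) auto
  also have "\<dots> = real N * beta_N r N" using False unfolding beta_N_def by simp
  also have "\<dots> \<le> real N * beta r"
    unfolding beta_def using assms beta_N_le
    by (intro mult_left_mono cSup_upper bdd_aboveI2) auto
  finally show ?thesis .
qed simp

section \<open>The eigenvalue bound\<close>

lemma gram_diag_nonneg:
  fixes V :: "real mat"
  assumes "V \<in> carrier_mat n k" "i < n"
  shows "0 \<le> (V * V\<^sup>T) $$ (i, i)"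
  using assms by (simp add: scalar_prod_def sum_nonneg)

lemma gram_sum_nonneg:
  fixes V :: "real mat"
  assumes V: "V \<in> carrier_mat n k"
  shows "0 \<le> (\<Sum>i<n. \<Sum>j<n. (V * V\<^sup>T) $$ (i, j))"
proof -
  have "(\<Sum>i<n. \<Sum>j<n. (V * V\<^sup>T) $$ (i, j)) = (\<Sum>i<n. \<Sum>j<n. \<Sum>l<k. V $$ (i, l) * V $$ (j, l))"
    using V by (intro sum.cong refl) (simp add: scalar_prod_def lessThan_atLeast0)
  also have "\<dots> = (\<Sum>l<k. (\<Sum>i<n. V $$ (i, l)) * (\<Sum>j<n. V $$ (j, l)))"
    by (simp add: sum_product sum.swap[of _ "{..<k}"])
  finally show ?thesis by (simp add: sum_nonneg)
qed

lemma unit_offdiag_pairing_lower_bound: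
  fixes A Q :: "real mat"
  assumes offdiag: "\<And>i j. i < n \<Longrightarrow> j < n \<Longrightarrow> i \<noteq> j \<Longrightarrow> 0 \<le> A $$ (i, j) \<and> A $$ (i, j) \<le> 1"
    and diag: "\<And>i. i < n \<Longrightarrow> 0 \<le> A $$ (i, i)"
    and Q_diag: "\<And>i. i < n \<Longrightarrow> 0 \<le> Q $$ (i, i)"
    and Q_sum: "0 \<le> (\<Sum>i<n. \<Sum>j<n. Q $$ (i, j))"
  shows "- (\<Sum>i<n. \<Sum>j<n. \<bar>Q $$ (i, j)\<bar>) / 2 \<le> (\<Sum>i<n. \<Sum>j<n. A $$ (i, j) * Q $$ (i, j))"
proof -
  have termwise: "(Q $$ (i, j) - \<bar>Q $$ (i, j)\<bar>) / 2 \<le> A $$ (i, j) * Q $$ (i, j)"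
    if "i < n" "j < n" for i j
  proof (cases "i = j \<or> 0 \<le> Q $$ (i, j)")
    case True
    then have "0 \<le> A $$ (i, j) \<and> 0 \<le> Q $$ (i, j)"
      using that diag Q_diag offdiag by (cases "i = j") auto
    then show ?thesis by simp
  next
    case False
    then have neg: "Q $$ (i, j) < 0" and "A $$ (i, j) \<le> 1" using offdiag that by auto
    then have "0 \<le> (1 - A $$ (i, j)) * - Q $$ (i, j)" by (intro mult_nonneg_nonneg) auto
    moreover have "(1 - A $$ (i, j)) * - Q $$ (i, j) = A $$ (i, j) * Q $$ (i, j) - Q $$ (i, j)"
      by (simp add: algebra_simps)
    moreover have "(Q $$ (i, j) - \<bar>Q $$ (i, j)\<bar>) / 2 = Q $$ (i, j)" using neg by simp
    ultimately show ?thesis by linarith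
  qed
  have "- (\<Sum>i<n. \<Sum>j<n. \<bar>Q $$ (i, j)\<bar>) / 2
      \<le> ((\<Sum>i<n. \<Sum>j<n. Q $$ (i, j)) - (\<Sum>i<n. \<Sum>j<n. \<bar>Q $$ (i, j)\<bar>)) / 2"
    using Q_sum by simp
  also have "\<dots> = (\<Sum>i<n. \<Sum>j<n. (Q $$ (i, j) - \<bar>Q $$ (i, j)\<bar>) / 2)"
    by (simp only: sum_divide_distrib[symmetric] sum_subtractf)
  also have "\<dots> \<le> (\<Sum>i<n. \<Sum>j<n. A $$ (i, j) * Q $$ (i, j))"
    using termwise by (intro sum_mono) auto
  finally show ?thesis .
qed

theorem theorem2p1:
  fixes r n :: nat and A :: "real mat" and lam :: "real list"
  assumes "r \<ge> 1" and "n \<ge> r"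
    and "A \<in> carrier_mat n n" and "transpose_mat A = A"
    and "\<And>i j. i < n \<Longrightarrow> j < n \<Longrightarrow> i \<noteq> j \<Longrightarrow> 0 \<le> A $$ (i, j) \<and> A $$ (i, j) \<le> 1"
    and "\<And>i. i < n \<Longrightarrow> A $$ (i, i) \<ge> 0"
    and "length lam = n" and "sorted_wrt (\<ge>) lam"
    and "char_poly A = (\<Prod>a\<leftarrow>lam. [:- a, 1:])"
  shows "sum_list (drop (n - r) lam) \<ge> - (beta r / 2) * real n"
proof -
  note A = assms(3,4) and rn = assms(2)
  obtain P where P: "P \<in> carrier_mat n n" "P\<^sup>T * P = 1\<^sub>m n"
    and PAP: "P\<^sup>T * A * P = mat_diag n (\<lambda>k. lam ! k)"
    using real_symmetric_orthogonal_diagonalization[OF A assms(9)] by blast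
  define ks where "ks = [n - r..<n]"
  define V where "V = mat_of_cols n (map (col P) ks)"
  have ks: "distinct ks" "set ks \<subseteq> {..<n}" "length ks = r" using rn by (auto simp: ks_def)
  have V: "V \<in> carrier_mat n r" "V\<^sup>T * V = 1\<^sub>m r"
    using orthonormal_cols_select[OF P ks(1,2)] mat_of_cols_carrier(1)[of n "map (col P) ks"] ks(3)
    by (auto simp: V_def)
  have "- (beta r / 2) * real n \<le> - (\<Sum>i<n. \<Sum>j<n. \<bar>(V * V\<^sup>T) $$ (i, j)\<bar>) / 2"
    using proj_set_sum_abs_le_beta[OF gram_orthonormal_in_proj_set[OF V] rn]
    by (simp add: algebra_simps)
  also have "\<dots> \<le> (\<Sum>i<n. \<Sum>j<n. A $$ (i, j) * (V * V\<^sup>T) $$ (i, j))"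
    using unit_offdiag_pairing_lower_bound[OF assms(5,6)]
      gram_diag_nonneg[OF V(1)] gram_sum_nonneg[OF V(1)]
    by blast
  also have "\<dots> = (\<Sum>l<r. (V\<^sup>T * A * V) $$ (l, l))"
    using congruence_diag_sum[OF A(1) V(1)] by simp
  also have "\<dots> = (\<Sum>l<r. lam ! (n - r + l))"
    using congruence_select_cols_index[OF A(1) P(1) ks(2)] PAP rn
    by (intro sum.cong refl) (auto simp: V_def ks_def mat_diag_def)
  also have "\<dots> = sum_list (drop (n - r) lam)"
    using assms(7) rn by (simp add: sum_list_sum_nth lessThan_atLeast0)
  finally show ?thesis .
qed

end
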